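(* Let $\operatorname{d}_q=q\frac{d}{dq}$. For all integers $s_1,\dots,s_l\ge1$, $r_1,\dots,r_l\ge0$, \[ \operatorname{d}_q\left[\begin{matrix}s_1,\dots,s_l\\ r_1,\dots,r_l\end{matrix}\right]=\sum_{j=1}^{l}s_j(r_j+1)\left[\begin{matrix}s_1,\dots,s_{j-1},\,s_j+1,\,s_{j+1},\dots,s_l\\ r_1,\dots,r_{j-1},\,r_j+1,\,r_{j+1},\dots,r_l\end{matrix}\right]. \] Consequently $\operatorname{d}_q\big(\operatorname{Fil}_{k,d,l}\big)\subset\operatorname{Fil}_{k+1,d+1,l}$ for all $k,d,l\ge0$.
   Context: Bi-brackets: for integers $s_1,\dots,s_l\ge1$, $r_1,\dots,r_l\ge0$, \[ \left[\begin{matrix}s_1,\dots,s_l\\ r_1,\dots,r_l\end{matrix}\right]:=\sum_{\substack{u_1>\dots>u_l>0\\ v_1,\dots,v_l>0}}\prod_{j=1}^{l}\frac{u_j^{r_j}}{r_j!}\,\frac{v_j^{s_j-1}}{(s_j-1)!}\;q^{u_1v_1+\dots+u_lv_l}\in\mathbb{Q}[[q]]; \] its upper weight is $s_1+\dots+s_l$, lower weight $r_1+\dots+r_l$, length $l$ (the constant $1$ is regarded as the bi-bracket of length $0$). $\operatorname{Fil}_{k,d,l}$ denotes the $\mathbb{Q}$-span of those bi-brackets (including possibly $1$) whose length $t$ satisfies $t\le k$, $t\le d$, $t\le l$, whose upper weight is $\le k$ and whose lower weight is $\le d$ (this is the intersection of the upper weight, lower weight and length filtrations, where the upper weight filtration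 $\operatorname{Fil}^W_k$ is spanned by bi-brackets of length $\le k$ and upper weight $\le k$, the lower weight filtration $\operatorname{Fil}^D_d$ by bi-brackets of length $\le d$ and lower weight $\le d$, and the length filtration $\operatorname{Fil}^L_l$ by bi-brackets of length $\le l$). *)

theory Defs
  imports "HOL-Computational_Algebra.Formal_Power_Series"
begin

text \<open>Index tuples (u_1,...,u_l), (v_1,...,v_l) (as lists) contributing to the
coefficient of q^N in the bi-bracket of length l:
u_1 > ... > u_l > 0, all v_j > 0, and u_1 v_1 + ... + u_l v_l = N.\<close>
definition bb_index :: "nat \<Rightarrow> nat \<Rightarrow> (nat list \<times> nat list) set" where
  "bb_index l N = {(u, v). length u = l \<and> length v = l \<and>
      sorted_wrt (>) u \<and> (\<forall>x\<in>set u. x > 0) \<and> (\<forall>y\<in>set v. y > 0) \<and>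
      (\<Sum>j<l. u ! j * v ! j) = N}"

text \<open>The bi-bracket with upper entries s and lower entries r (lists of equal length),
as a formal power series in q over the rationals.\<close>
definition bibracket :: "nat list \<Rightarrow> nat list \<Rightarrow> rat fps" where
  "bibracket s r = Abs_fps (\<lambda>N. \<Sum>(u, v) \<in> bb_index (length s) N.
      \<Prod>j<length s. (of_nat (u ! j ^ (r ! j)) / fact (r ! j)) *
                     (of_nat (v ! j ^ (s ! j - 1)) / fact (s ! j - 1)))"

definition dq :: "rat fps \<Rightarrow> rat fps" where
  "dq f = fps_X * fps_deriv f"

text \<open>Admissible index data for Fil_{k,d,l}: s_j \<ge> 1, r_j \<ge> 0, length t with
t \<le> k, t \<le> d, t \<le> l, upper weight \<le> k, lower weight \<le> d.
(The empty index gives the bi-bracket 1.)\<close>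
definition fil_index :: "nat \<Rightarrow> nat \<Rightarrow> nat \<Rightarrow> (nat list \<times> nat list) set" where
  "fil_index k d l = {(s, r). length s = length r \<and> (\<forall>x\<in>set s. x \<ge> 1) \<and>
      length s \<le> k \<and> length s \<le> d \<and> length s \<le> l \<and>
      sum_list s \<le> k \<and> sum_list r \<le> d}"

definition Fil :: "nat \<Rightarrow> nat \<Rightarrow> nat \<Rightarrow> rat fps set" where
  "Fil k d l = {f. \<exists>A c. finite A \<and> A \<subseteq> fil_index k d l \<and>
      f = (\<Sum>(s, r)\<in>A. fps_const (c (s, r)) * bibracket s r)}"

end

theory Submission
  imports Defs
begin

text \<open>Coefficientwise, \<open>d\<^sub>q\<close> multiplies the coefficient of \<open>q\<^sup>N\<close> by
  \<open>N = u\<^sub>1v\<^sub>1 + \<dots> + u\<^sub>lv\<^sub>l\<close>. Splitting this sum, the \<open>j\<close>-th summand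
  \<open>u\<^sub>jv\<^sub>j\<close> is absorbed into the \<open>j\<close>-th factor of the product:
  \<open>uv \<cdot> u\<^sup>r/r! \<cdot> v\<^sup>s\<^sup>-\<^sup>1/(s-1)! = s(r+1) \<cdot> u\<^sup>r\<^sup>+\<^sup>1/(r+1)! \<cdot> v\<^sup>s/s!\<close>.
  Raising \<open>s\<^sub>j\<close> and \<open>r\<^sub>j\<close> by one raises the upper and lower weight by one and
  keeps the length, so \<open>d\<^sub>q\<close> maps \<open>Fil\<^sub>k\<^sub>,\<^sub>d\<^sub>,\<^sub>l\<close> into \<open>Fil\<^sub>k\<^sub>+\<^sub>1\<^sub>,\<^sub>d\<^sub>+\<^sub>1\<^sub>,\<^sub>l\<close>
  by linearity.\<close>

lemma fps_nth_dq: "fps_nth (dq f) n = of_nat n * fps_nth f n"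
  unfolding dq_def by (cases n) simp_all

lemma dq_sum: "dq (sum g A) = (\<Sum>x\<in>A. dq (g x))"
  by (rule fps_ext) (simp add: fps_nth_dq fps_sum_nth sum_distrib_left)

lemma dq_const_mult: "dq (fps_const a * f) = fps_const a * dq f"
  unfolding dq_def by (simp add: mult.left_commute)

definition bibracket_factor :: "nat list \<Rightarrow> nat list \<Rightarrow> nat list \<Rightarrow> nat list \<Rightarrow> nat \<Rightarrow> rat" where
  "bibracket_factor s r u v j =
     (of_nat (u ! j ^ (r ! j)) / fact (r ! j)) * (of_nat (v ! j ^ (s ! j - 1)) / fact (s ! j - 1))"

lemma fps_nth_bibracket:
  "fps_nth (bibracket s r) N =
     (\<Sum>(u, v) \<in> bb_index (length s) N. \<Prod>j<length s. bibracket_factor s r u v j)"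
  unfolding bibracket_def bibracket_factor_def by simp

lemma mult_divided_powers_raise:
  fixes u v r s :: nat
  assumes "s \<ge> 1"
  shows "of_nat (u * v) * (of_nat (u ^ r) / fact r * (of_nat (v ^ (s - 1)) / fact (s - 1)))
       = (of_nat (s * (r + 1)) :: 'a :: field_char_0) *
           (of_nat (u ^ (r + 1)) / fact (r + 1) * (of_nat (v ^ s) / fact s))"
proof -
  obtain m where s: "s = Suc m" using assms by (cases s) auto
  have "(fact (Suc r) :: 'a) = of_nat (Suc r) * fact r" "(fact (Suc m) :: 'a) = of_nat (Suc m) * fact m"
    by simp_all
  moreover have "(1 + of_nat r :: 'a) \<noteq> 0" "(1 + of_nat m :: 'a) \<noteq> 0"
    by (metis of_nat_Suc of_nat_eq_0_iff nat.distinct(1))+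
  ultimately show ?thesis
    unfolding s Suc_eq_plus1[symmetric]
    by (simp only: diff_Suc_1 power_Suc of_nat_mult) (simp add: field_simps del: of_nat_Suc)
qed

lemma bibracket_factor_update_other:
  "i \<noteq> j \<Longrightarrow> bibracket_factor (s[j := a]) (r[j := b]) u v i = bibracket_factor s r u v i"
  by (simp add: bibracket_factor_def)

lemma weight_mult_prod_bibracket_factor:
  assumes "j < length s" "length r = length s" "s ! j \<ge> 1"
  shows "of_nat (u ! j * v ! j) * (\<Prod>i<length s. bibracket_factor s r u v i)
     = of_nat (s ! j * (r ! j + 1)) *
         (\<Prod>i<length s. bibracket_factor (s[j := s ! j + 1]) (r[j := r ! j + 1]) u v i)"
proof -
  let ?s' = "s[j := s ! j + 1]" and ?r' = "r[j := r ! j + 1]"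
  have j: "j \<in> {..<length s}" using assms(1) by simp
  have rest: "(\<Prod>i\<in>{..<length s} - {j}. bibracket_factor ?s' ?r' u v i)
      = (\<Prod>i\<in>{..<length s} - {j}. bibracket_factor s r u v i)"
    by (rule prod.cong) (simp_all add: bibracket_factor_update_other)
  have "of_nat (u ! j * v ! j) * bibracket_factor s r u v j
      = of_nat (s ! j * (r ! j + 1)) * bibracket_factor ?s' ?r' u v j"
    using assms mult_divided_powers_raise[OF assms(3)] by (simp add: bibracket_factor_def)
  then show ?thesis
    unfolding prod.remove[OF finite_lessThan j] rest by (simp add: mult.assoc[symmetric])
qed

lemma dq_bibracket:
  assumes "length s = length r" "\<forall>x\<in>set s. x \<ge> 1"
  shows "dq (bibracket s r) =
           (\<Sum>j<length s. fps_const (of_nat (s ! j * (r ! j + 1))) *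
              bibracket (s[j := s ! j + 1]) (r[j := r ! j + 1]))"
proof (rule fps_ext)
  fix N
  let ?raised = "\<lambda>u v j. of_nat (s ! j * (r ! j + 1)) *
     (\<Prod>i<length s. bibracket_factor (s[j := s ! j + 1]) (r[j := r ! j + 1]) u v i)"
  have "of_nat N * (\<Prod>j<length s. bibracket_factor s r u v j) = (\<Sum>j<length s. ?raised u v j)"
    if "(u, v) \<in> bb_index (length s) N" for u v
  proof -
    have "N = (\<Sum>j<length s. u ! j * v ! j)" using that by (simp add: bb_index_def)
    then have "of_nat N * (\<Prod>j<length s. bibracket_factor s r u v j)
        = (\<Sum>j<length s. of_nat (u ! j * v ! j) * (\<Prod>i<length s. bibracket_factor s r u v i))"
      by (simp add: sum_distrib_right)
    also have "\<dots> = (\<Sum>j<length s. ?raised u v j)"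
      using assms by (intro sum.cong refl weight_mult_prod_bibracket_factor) auto
    finally show ?thesis .
  qed
  then have "fps_nth (dq (bibracket s r)) N = (\<Sum>(u, v) \<in> bb_index (length s) N. \<Sum>j<length s. ?raised u v j)"
    by (simp add: fps_nth_dq fps_nth_bibracket sum_distrib_left case_prod_unfold)
  then show "fps_nth (dq (bibracket s r)) N = fps_nth (\<Sum>j<length s.
      fps_const (of_nat (s ! j * (r ! j + 1))) * bibracket (s[j := s ! j + 1]) (r[j := r ! j + 1])) N"
    using assms(1)
    by (simp add: fps_sum_nth fps_nth_bibracket sum_distrib_left case_prod_unfold
        sum.swap[where A = "bb_index _ _"])
qed

lemma fil_index_raise:
  assumes "(s, r) \<in> fil_index k d l" "j < length s"
  shows "(s[j := s ! j + 1], r[j := r ! j + 1]) \<in> fil_index (k + 1) (d + 1) l"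
proof -
  have len: "length s = length r" and pos: "\<forall>x\<in>set s. x \<ge> 1"
    using assms(1) by (auto simp: fil_index_def)
  have "\<forall>x\<in>set (s[j := s ! j + 1]). x \<ge> 1"
    using pos by (auto dest!: set_update_subset_insert[THEN subsetD])
  with assms len show ?thesis
    by (auto simp: fil_index_def sum_list_update)
qed

lemma Fil_zero: "0 \<in> Fil k d l"
  unfolding Fil_def by (intro CollectI exI[of _ "{}"]) simp

lemma Fil_add:
  assumes "f \<in> Fil k d l" "g \<in> Fil k d l"
  shows "f + g \<in> Fil k d l"
proof -
  let ?b = "\<lambda>x. bibracket (fst x) (snd x)"
  obtain A a where A: "finite A" "A \<subseteq> fil_index k d l" "f = (\<Sum>x\<in>A. fps_const (a x) * ?b x)"
    using assms(1) unfolding Fil_def by (auto simp: case_prod_unfold)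
  obtain B b where B: "finite B" "B \<subseteq> fil_index k d l" "g = (\<Sum>x\<in>B. fps_const (b x) * ?b x)"
    using assms(2) unfolding Fil_def by (auto simp: case_prod_unfold)
  define c where "c x = (if x \<in> A then a x else 0) + (if x \<in> B then b x else 0)" for x
  have "f = (\<Sum>x\<in>A \<union> B. if x \<in> A then fps_const (a x) * ?b x else 0)"
    using A B by (simp add: sum.If_cases Int_absorb1)
  moreover have "g = (\<Sum>x\<in>A \<union> B. if x \<in> B then fps_const (b x) * ?b x else 0)"
    using A B by (simp add: sum.If_cases Int_absorb1 Int_commute)
  ultimately have "f + g = (\<Sum>x\<in>A \<union> B. fps_const (c x) * ?b x)"
    by (simp add: sum.distrib[symmetric] c_def distrib_right flip: fps_const_add)
      (auto intro: sum.cong)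
  then show ?thesis
    unfolding Fil_def using A B by (intro CollectI exI[of _ "A \<union> B"] exI[of _ c]) (auto simp: case_prod_unfold)
qed

lemma Fil_const_mult:
  assumes "f \<in> Fil k d l"
  shows "fps_const a * f \<in> Fil k d l"
proof -
  obtain A c where A: "finite A" "A \<subseteq> fil_index k d l"
    "f = (\<Sum>(s, r)\<in>A. fps_const (c (s, r)) * bibracket s r)"
    using assms unfolding Fil_def by blast
  have "fps_const a * f = (\<Sum>(s, r)\<in>A. fps_const (a * c (s, r)) * bibracket s r)"
    unfolding A(3)
    by (simp add: sum_distrib_left case_prod_unfold mult.assoc del: fps_const_mult flip: fps_const_mult)
  then show ?thesis
    unfolding Fil_def using A by (intro CollectI exI[of _ A] exI[of _ "\<lambda>x. a * c x"]) auto
qed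

lemma Fil_sum: "finite A \<Longrightarrow> (\<And>x. x \<in> A \<Longrightarrow> g x \<in> Fil k d l) \<Longrightarrow> sum g A \<in> Fil k d l"
  by (induction A rule: finite_induct) (auto intro: Fil_zero Fil_add)

lemma bibracket_in_Fil: "(s, r) \<in> fil_index k d l \<Longrightarrow> bibracket s r \<in> Fil k d l"
  unfolding Fil_def by (intro CollectI exI[of _ "{(s, r)}"] exI[of _ "\<lambda>_. 1"]) auto

lemma dq_bibracket_in_Fil:
  assumes "(s, r) \<in> fil_index k d l"
  shows "dq (bibracket s r) \<in> Fil (k + 1) (d + 1) l"
proof -
  have "length s = length r" and "\<forall>x\<in>set s. x \<ge> 1"
    using assms by (auto simp: fil_index_def)
  then show ?thesis
    unfolding dq_bibracket[OF \<open>length s = length r\<close> \<open>\<forall>x\<in>set s. x \<ge> 1\<close>]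
    using assms by (intro Fil_sum Fil_const_mult bibracket_in_Fil fil_index_raise) auto
qed

lemma dq_Fil_subset: "dq ` Fil k d l \<subseteq> Fil (k + 1) (d + 1) l"
proof
  fix g assume "g \<in> dq ` Fil k d l"
  then obtain A c where A: "finite A" "A \<subseteq> fil_index k d l"
    and g: "g = dq (\<Sum>(s, r)\<in>A. fps_const (c (s, r)) * bibracket s r)"
    unfolding Fil_def by blast
  have "g = (\<Sum>(s, r)\<in>A. fps_const (c (s, r)) * dq (bibracket s r))"
    unfolding g dq_sum by (simp add: case_prod_unfold dq_const_mult)
  also have "\<dots> \<in> Fil (k + 1) (d + 1) l"
    using A by (intro Fil_sum) (auto intro!: Fil_const_mult dq_bibracket_in_Fil[simplified] simp: subset_iff)
  finally show "g \<in> Fil (k + 1) (d + 1) l" .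
qed

theorem proposition4p2:
  shows "(\<forall>s r. length s = length r \<longrightarrow> (\<forall>x\<in>set s. x \<ge> 1) \<longrightarrow>
            dq (bibracket s r) =
              (\<Sum>j<length s. fps_const (of_nat (s ! j * (r ! j + 1))) *
                 bibracket (s[j := s ! j + 1]) (r[j := r ! j + 1])))
       \<and> (\<forall>k d l. dq ` Fil k d l \<subseteq> Fil (k + 1) (d + 1) l)"
  using dq_bibracket dq_Fil_subset by blast

end
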